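(* Let $\alpha\approx1.465571$ be the real root of $x^3-x^2-1$ lying between $1$ and $2$. Every graph of pathwidth at most $1$ and order $n$ has at most $\alpha^n$ induced matchings. Moreover, the number of induced matchings of the path on $n$ vertices is at least $0.89\,\alpha^n+o(1)$; in particular it is $\Theta(\alpha^n)$.
   Context: An induced matching of a graph $G=(V,E)$ is here a set $D\subseteq V$ such that every vertex of $D$ has exactly one neighbour in $D$ (equivalently, the set of edges of $G[D]$ is a matching whose vertex set is $D$ and which is an induced subgraph); i.e. a $(\{1\},\mathbb{N})$-dominating set, where $D$ is $(\sigma,\rho)$-dominating if $|N(v)\cap D|\in\sigma$ for $v\in D$ and $|N(v)\cap D|\in\rho$ for $v\notin D$. The empty set counts. Order = number of vertices; pathwidth is the standard notion. *)

theory Defs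
  imports Complex_Main "HOL-Library.Landau_Symbols"
begin

definition simple_graph :: "'a set \<Rightarrow> 'a set set \<Rightarrow> bool" where
  "simple_graph V E \<longleftrightarrow> finite V \<and>
     (\<forall>e\<in>E. \<exists>u v. u \<noteq> v \<and> e = {u, v} \<and> u \<in> V \<and> v \<in> V)"

definition nbhd :: "'a set set \<Rightarrow> 'a \<Rightarrow> 'a set" where
  "nbhd E v = {u. {u, v} \<in> E}"

definition sigma_rho_dominating ::
  "nat set \<Rightarrow> nat set \<Rightarrow> 'a set \<Rightarrow> 'a set set \<Rightarrow> 'a set \<Rightarrow> bool" where
  "sigma_rho_dominating \<sigma> \<rho> V E D \<longleftrightarrow> D \<subseteq> V \<and>
     (\<forall>v\<in>D. card (nbhd E v \<inter> D) \<in> \<sigma>) \<and>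
     (\<forall>v\<in>V - D. card (nbhd E v \<inter> D) \<in> \<rho>)"

definition induced_matching :: "'a set \<Rightarrow> 'a set set \<Rightarrow> 'a set \<Rightarrow> bool" where
  "induced_matching V E D \<longleftrightarrow> sigma_rho_dominating {1} UNIV V E D"

definition num_induced_matchings :: "'a set \<Rightarrow> 'a set set \<Rightarrow> nat" where
  "num_induced_matchings V E = card {D. induced_matching V E D}"

definition path_decomposition :: "'a set \<Rightarrow> 'a set set \<Rightarrow> 'a set list \<Rightarrow> bool" where
  "path_decomposition V E Bs \<longleftrightarrow>
     (\<forall>B\<in>set Bs. B \<subseteq> V) \<and>
     (\<forall>v\<in>V. \<exists>i<length Bs. v \<in> Bs ! i) \<and>
     (\<forall>e\<in>E. \<exists>i<length Bs. e \<subseteq> Bs ! i) \<and>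
     (\<forall>v i j k. i \<le> j \<and> j \<le> k \<and> k < length Bs \<and> v \<in> Bs ! i \<and> v \<in> Bs ! k
        \<longrightarrow> v \<in> Bs ! j)"

definition pathwidth :: "'a set \<Rightarrow> 'a set set \<Rightarrow> nat" where
  "pathwidth V E = (LEAST k. \<exists>Bs. path_decomposition V E Bs \<and> (\<forall>B\<in>set Bs. card B \<le> k + 1))"

definition path_V :: "nat \<Rightarrow> nat set" where
  "path_V n = {0..<n}"

definition path_E :: "nat \<Rightarrow> nat set set" where
  "path_E n = {{i, Suc i} | i. Suc i < n}"

end

theory Submission
  imports Defs
begin

text \<open>
  A graph of pathwidth at most 1 is a forest: every nonempty vertex set contains a vertex v
  with at most one neighbour u in it. An induced matching either avoids v, or contains the
  edge {u,v} and nothing else of the closed neighbourhoods of u and v. If u has a further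
  neighbour this removes at least three vertices and gives the bound
  \<alpha>^(n-1) + \<alpha>^(n-3) = \<alpha>^n; otherwise {u,v} is an isolated edge, which doubles
  the count on the remaining n-2 vertices, and 2 \<le> \<alpha>^2. On the path the recurrence is
  exact, a(n+3) = a(n+2) + a(n), so bounds c \<alpha>^n \<le> a(n) \<le> \<alpha>^n propagate from three
  consecutive values; n = 8, 9, 10 give c = 0.89.
\<close>

definition induced_matchings_on :: "'a set set \<Rightarrow> 'a set \<Rightarrow> 'a set set" where
  "induced_matchings_on E S = {D. D \<subseteq> S \<and> (\<forall>v\<in>D. card (nbhd E v \<inter> D) = 1)}"

lemma num_induced_matchings_eq_card:
  "num_induced_matchings V E = card (induced_matchings_on E V)"
  unfolding num_induced_matchings_def induced_matching_def sigma_rho_dominating_def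
    induced_matchings_on_def by simp

lemma nbhd_sym: "u \<in> nbhd E w \<longleftrightarrow> w \<in> nbhd E u"
  by (simp add: nbhd_def insert_commute)

lemma finite_induced_matchings_on: "finite S \<Longrightarrow> finite (induced_matchings_on E S)"
  by (rule finite_subset[of _ "Pow S"]) (auto simp: induced_matchings_on_def)

lemma induced_matchings_on_empty: "induced_matchings_on E {} = {{}}"
  by (auto simp: induced_matchings_on_def)

lemma card_induced_matchings_on_split:
  assumes "finite S"
  shows "card (induced_matchings_on E S) =
           card (induced_matchings_on E (S - {v})) + card {D \<in> induced_matchings_on E S. v \<in> D}"
proof -
  have "induced_matchings_on E S =
          induced_matchings_on E (S - {v}) \<union> {D \<in> induced_matchings_on E S. v \<in> D}"
    by (auto simp: induced_matchings_on_def)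
  moreover have "induced_matchings_on E (S - {v}) \<inter> {D \<in> induced_matchings_on E S. v \<in> D} = {}"
    by (auto simp: induced_matchings_on_def)
  ultimately show ?thesis
    using finite_induced_matchings_on[OF assms]
    by (metis (no_types, lifting) card_Un_disjoint finite_Diff finite_Un assms)
qed

lemma induced_matchings_on_isolated:
  assumes "nbhd E v \<inter> S = {}"
  shows "induced_matchings_on E S = induced_matchings_on E (S - {v})"
proof -
  have "v \<notin> D" if "D \<in> induced_matchings_on E S" for D
  proof
    assume "v \<in> D"
    with that have "card (nbhd E v \<inter> D) = 1" and "D \<subseteq> S"
      by (auto simp: induced_matchings_on_def)
    with assms show False by (metis card.empty disjoint_iff subsetD zero_neq_one)
  qed
  then show ?thesis by (auto simp: induced_matchings_on_def)
qed

lemma card_induced_matchings_on_edge: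
  assumes loopless: "\<And>x. {x} \<notin> E" and "u \<in> S" "v \<in> S" and uv: "{u, v} \<in> E"
  shows "card {D \<in> induced_matchings_on E S. u \<in> D \<and> v \<in> D} =
         card (induced_matchings_on E (S - (insert u (nbhd E u) \<union> insert v (nbhd E v))))"
    (is "card ?A = card (induced_matchings_on E ?T)")
proof (rule bij_betw_same_card[of "\<lambda>D. D - {u, v}"],
       rule bij_betw_byWitness[where f' = "\<lambda>D. D \<union> {u, v}"])
  have u_nb: "u \<in> nbhd E v" and v_nb: "v \<in> nbhd E u"
    using uv by (auto simp: nbhd_def insert_commute)
  have no_self: "x \<notin> nbhd E x" for x using loopless by (auto simp: nbhd_def)
  show "\<forall>D\<in>?A. D - {u, v} \<union> {u, v} = D" by auto
  show "\<forall>D\<in>induced_matchings_on E ?T. D \<union> {u, v} - {u, v} = D"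
    by (auto simp: induced_matchings_on_def)
  show "(\<lambda>D. D - {u, v}) ` ?A \<subseteq> induced_matchings_on E ?T"
  proof safe
    fix D assume D: "D \<in> induced_matchings_on E S" "u \<in> D" "v \<in> D"
    have "card (nbhd E u \<inter> D) = 1" "card (nbhd E v \<inter> D) = 1"
      using D by (auto simp: induced_matchings_on_def)
    then have only_v: "nbhd E u \<inter> D = {v}" and only_u: "nbhd E v \<inter> D = {u}"
      using D u_nb v_nb by (metis IntI card_1_singletonE singletonD)+
    have "nbhd E w \<inter> (D - {u, v}) = nbhd E w \<inter> D" if "w \<in> D - {u, v}" for w
      using that only_u only_v nbhd_sym by fastforce
    then show "D - {u, v} \<in> induced_matchings_on E ?T"
      using D only_u only_v by (auto simp: induced_matchings_on_def)
  qed
  show "(\<lambda>D. D \<union> {u, v}) ` induced_matchings_on E ?T \<subseteq> ?A"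
  proof safe
    fix D assume D: "D \<in> induced_matchings_on E ?T"
    then have far: "w \<notin> nbhd E u \<and> w \<notin> nbhd E v \<and> w \<noteq> u \<and> w \<noteq> v" if "w \<in> D" for w
      using that by (auto simp: induced_matchings_on_def)
    have "nbhd E w \<inter> (D \<union> {u, v}) = nbhd E w \<inter> D" if "w \<in> D" for w
      using far[OF that] by (auto simp: nbhd_sym)
    moreover have "nbhd E u \<inter> (D \<union> {u, v}) = {v}" "nbhd E v \<inter> (D \<union> {u, v}) = {u}"
      using far u_nb v_nb no_self by auto
    ultimately show "D \<union> {u, v} \<in> induced_matchings_on E S"
      using D \<open>u \<in> S\<close> \<open>v \<in> S\<close> by (auto simp: induced_matchings_on_def)
  qed
qed

lemma card_induced_matchings_on_leaf:
  assumes loopless: "\<And>x. {x} \<notin> E" and "finite S" "v \<in> S" and leaf: "nbhd E v \<inter> S = {u}"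
  shows "card (induced_matchings_on E S) =
           card (induced_matchings_on E (S - {v}))
         + card (induced_matchings_on E (S - (insert u (nbhd E u) \<union> insert v (nbhd E v))))"
proof -
  have "u \<in> D" if "D \<in> induced_matchings_on E S" "v \<in> D" for D
  proof -
    from that have "card (nbhd E v \<inter> D) = 1" "D \<subseteq> S" by (auto simp: induced_matchings_on_def)
    then obtain x where "x \<in> nbhd E v" "x \<in> D" by (metis card_1_singletonE Int_iff insertI1)
    with leaf \<open>D \<subseteq> S\<close> show "u \<in> D" by (metis IntI singletonD subsetD)
  qed
  then have "{D \<in> induced_matchings_on E S. v \<in> D} = {D \<in> induced_matchings_on E S. u \<in> D \<and> v \<in> D}"
    by blast
  moreover have "{u, v} \<in> E" using leaf by (auto simp: nbhd_def)
  ultimately show ?thesis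
    using card_induced_matchings_on_split[OF \<open>finite S\<close>, of E v] leaf
      card_induced_matchings_on_edge[OF loopless, of u S v] \<open>v \<in> S\<close> by auto
qed

lemma card_induced_matchings_on_isolated_edge:
  assumes loopless: "\<And>x. {x} \<notin> E" and "finite S" "v \<in> S"
    and "nbhd E v \<inter> S = {u}" and "nbhd E u \<inter> S = {v}"
  shows "card (induced_matchings_on E S) = 2 * card (induced_matchings_on E (S - {u, v}))"
proof -
  have "S - (insert u (nbhd E u) \<union> insert v (nbhd E v)) = S - {u, v}"
    using assms(4,5) by auto
  moreover have "nbhd E u \<inter> (S - {v}) = {}" using assms(5) by auto
  then have "induced_matchings_on E (S - {v}) = induced_matchings_on E (S - {u, v})"
    using induced_matchings_on_isolated[of E u "S - {v}"] by (metis Diff_insert2 insert_commute)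
  ultimately show ?thesis using card_induced_matchings_on_leaf[OF assms(1-4)] by simp
qed

lemma power_add_2_plus_power_le:
  fixes \<alpha> :: real
  assumes "1 < \<alpha>" and "\<alpha>^2 + 1 \<le> \<alpha>^3"
  shows "\<alpha> ^ (m + 2) + \<alpha> ^ m \<le> \<alpha> ^ (m + 3)"
proof -
  have "\<alpha> ^ (m + 2) + \<alpha> ^ m = \<alpha>^m * (\<alpha>^2 + 1)"
    by (simp add: power_add power2_eq_square algebra_simps)
  also have "\<dots> \<le> \<alpha>^m * \<alpha>^3" using assms by (intro mult_left_mono) auto
  finally show ?thesis by (simp add: power_add)
qed

lemma card_Diff_add_le:
  assumes "finite S" "A \<subseteq> S" "A \<subseteq> B"
  shows "card (S - B) + card A \<le> card S"
proof -
  have "card (S - B) \<le> card (S - A)" using assms by (intro card_mono) auto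
  moreover have "card (S - A) = card S - card A"
    using assms by (intro card_Diff_subset) (auto intro: finite_subset)
  moreover have "card A \<le> card S" using assms by (intro card_mono)
  ultimately show ?thesis by linarith
qed

lemma card_induced_matchings_on_pendant_branch:
  assumes loopless: "\<And>x. {x} \<notin> E" and "finite S" "v \<in> S" and leaf: "nbhd E v \<inter> S = {u}"
    and w: "w \<in> nbhd E u" "w \<in> S" "w \<noteq> v"
  obtains T where "T \<subseteq> S" "card T + 3 \<le> card S"
    "card (induced_matchings_on E S) =
       card (induced_matchings_on E (S - {v})) + card (induced_matchings_on E T)"
proof -
  define T where "T = S - (insert u (nbhd E u) \<union> insert v (nbhd E v))"
  have "{u, v} \<in> E" "u \<in> S" using leaf by (auto simp: nbhd_def)
  then have "u \<noteq> v" "v \<in> nbhd E u" "w \<noteq> u"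
    using loopless w(1) by (auto simp: nbhd_def insert_commute)
  then have "card {u, v, w} = 3" using w by auto
  moreover have "{u, v, w} \<subseteq> S" "{u, v, w} \<subseteq> insert u (nbhd E u) \<union> insert v (nbhd E v)"
    using w \<open>u \<in> S\<close> \<open>v \<in> S\<close> \<open>v \<in> nbhd E u\<close> by auto
  ultimately have "card T + 3 \<le> card S"
    unfolding T_def using card_Diff_add_le[OF \<open>finite S\<close>] by metis
  moreover have "T \<subseteq> S" by (auto simp: T_def)
  moreover have "card (induced_matchings_on E S) =
                   card (induced_matchings_on E (S - {v})) + card (induced_matchings_on E T)"
    unfolding T_def by (rule card_induced_matchings_on_leaf[OF loopless \<open>finite S\<close> \<open>v \<in> S\<close> leaf])
  ultimately show ?thesis using that by blast
qed

definition one_degenerate :: "'a set set \<Rightarrow> 'a set \<Rightarrow> bool" where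
  "one_degenerate E V \<longleftrightarrow> (\<forall>T\<subseteq>V. T \<noteq> {} \<longrightarrow> (\<exists>v\<in>T. card (nbhd E v \<inter> T) \<le> 1))"

lemma one_degenerate_subset: "one_degenerate E V \<Longrightarrow> S \<subseteq> V \<Longrightarrow> one_degenerate E S"
  by (auto simp: one_degenerate_def)

lemma two_le_square_if_cubic:
  fixes \<alpha> :: real
  assumes "1 < \<alpha>" and "\<alpha>^2 + 1 \<le> \<alpha>^3"
  shows "2 \<le> \<alpha>^2"
proof (rule ccontr)
  assume "\<not> 2 \<le> \<alpha>^2"
  have "1 \<le> \<alpha>^2 * (\<alpha> - 1)"
    using assms(2) by (simp add: algebra_simps power2_eq_square power3_eq_cube)
  also have "\<dots> < 2 * (\<alpha> - 1)"
    using \<open>\<not> 2 \<le> \<alpha>^2\<close> assms(1) by (intro mult_strict_right_mono) auto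
  finally have "(3 / 2)^2 < \<alpha>^2" by (intro power_strict_mono) auto
  then show False using \<open>\<not> 2 \<le> \<alpha>^2\<close> by (simp add: power2_eq_square)
qed

theorem card_induced_matchings_on_one_degenerate:
  fixes \<alpha> :: real
  assumes \<alpha>: "1 < \<alpha>" "\<alpha>^2 + 1 \<le> \<alpha>^3" and loopless: "\<And>x. {x} \<notin> E"
    and "finite S" and "one_degenerate E S"
  shows "real (card (induced_matchings_on E S)) \<le> \<alpha> ^ card S"
  using assms(4,5)
proof (induction "card S" arbitrary: S rule: less_induct)
  case less
  have power_mono_\<alpha>: "\<alpha>^i \<le> \<alpha>^j" if "i \<le> j" for i j
    using \<alpha> that by (simp add: power_increasing)
  have IH: "real (card (induced_matchings_on E T)) \<le> \<alpha> ^ card T" if "T \<subseteq> S" "card T < card S" for T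
    using less that by (meson finite_subset one_degenerate_subset)
  show ?case
  proof (cases "S = {}")
    case True then show ?thesis by (simp add: induced_matchings_on_empty)
  next
    case False
    then obtain v where "v \<in> S" and deg: "card (nbhd E v \<inter> S) \<le> 1"
      using less.prems(2) by (auto simp: one_degenerate_def)
    have card_S: "card S = Suc (card (S - {v}))"
      using less.prems(1) \<open>v \<in> S\<close> by (rule card_Suc_Diff1[symmetric])
    have without_v: "real (card (induced_matchings_on E (S - {v}))) \<le> \<alpha> ^ card (S - {v})"
      using IH card_S by auto
    consider "nbhd E v \<inter> S = {}" | u where "nbhd E v \<inter> S = {u}"
      using deg less.prems(1) by (metis card_0_eq card_1_singletonE finite_Int le_Suc_eq le_zero_eq One_nat_def)
    then show ?thesis
    proof cases
      case 1
      then show ?thesis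
        using induced_matchings_on_isolated[OF 1] without_v power_mono_\<alpha>[of "card (S - {v})" "card S"] card_S
        by simp
    next
      case (2 u)
      have "{u, v} \<in> E" "u \<in> S" using 2 by (auto simp: nbhd_def)
      then have "u \<noteq> v" "v \<in> nbhd E u" using loopless by (auto simp: nbhd_def insert_commute)
      show ?thesis
      proof (cases "nbhd E u \<inter> S = {v}")
        case True
        have "{u, v} \<subseteq> S" using \<open>u \<in> S\<close> \<open>v \<in> S\<close> by simp
        moreover have "card {u, v} = 2" using \<open>u \<noteq> v\<close> by simp
        ultimately have card_S2: "card S = card (S - {u, v}) + 2"
          using card_Diff_subset[of "{u, v}" S] card_mono[OF less.prems(1), of "{u, v}"] by simp
        have "real (card (induced_matchings_on E S)) = 2 * real (card (induced_matchings_on E (S - {u, v})))"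
          using card_induced_matchings_on_isolated_edge[OF loopless less.prems(1) \<open>v \<in> S\<close> 2 True] by simp
        also have "\<dots> \<le> \<alpha>^2 * \<alpha> ^ card (S - {u, v})"
          using IH[of "S - {u, v}"] card_S2 two_le_square_if_cubic[OF \<alpha>] \<alpha>(1) by (intro mult_mono) auto
        also have "\<dots> = \<alpha> ^ card S" unfolding card_S2 by (simp only: power_add mult.commute)
        finally show ?thesis .
      next
        case False
        then obtain w where "w \<in> nbhd E u" "w \<in> S" "w \<noteq> v"
          using \<open>v \<in> nbhd E u\<close> \<open>v \<in> S\<close> by blast
        then obtain T where T: "T \<subseteq> S" "card T + 3 \<le> card S"
          "card (induced_matchings_on E S) =
             card (induced_matchings_on E (S - {v})) + card (induced_matchings_on E T)"
          by (rule card_induced_matchings_on_pendant_branch[OF loopless less.prems(1) \<open>v \<in> S\<close> 2])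
        then obtain m where m: "card S = m + 3" "card T \<le> m"
          by (intro that[of "card S - 3"]) auto
        have "real (card (induced_matchings_on E T)) \<le> \<alpha> ^ m"
          using IH[OF T(1)] power_mono_\<alpha>[OF m(2)] m by fastforce
        then have "real (card (induced_matchings_on E S)) \<le> \<alpha> ^ (m + 2) + \<alpha> ^ m"
          using T(3) without_v card_S m(1) by simp
        also have "\<dots> \<le> \<alpha> ^ (m + 3)" using power_add_2_plus_power_le[OF \<alpha>] .
        finally show ?thesis using m by simp
      qed
    qed
  qed
qed

lemma simple_graph_loopless: "simple_graph V E \<Longrightarrow> {x} \<notin> E"
  unfolding simple_graph_def by (metis doubleton_eq_iff insert_absorb2)

lemma pathwidth_decomposition_exists:
  assumes "simple_graph V E"
  shows "\<exists>Bs. path_decomposition V E Bs \<and> (\<forall>B\<in>set Bs. card B \<le> pathwidth V E + 1)"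
proof -
  have "path_decomposition V E [V]"
    using assms by (auto simp: path_decomposition_def simple_graph_def)
  then have "\<exists>Bs. path_decomposition V E Bs \<and> (\<forall>B\<in>set Bs. card B \<le> card V + 1)"
    by (intro exI[of _ "[V]"]) auto
  then show ?thesis unfolding pathwidth_def by (rule LeastI)
qed

lemma
  assumes "path_decomposition V E Bs"
  shows path_decomposition_bag_subset: "i < length Bs \<Longrightarrow> Bs ! i \<subseteq> V"
    and path_decomposition_vertex_bag: "x \<in> V \<Longrightarrow> \<exists>i<length Bs. x \<in> Bs ! i"
    and path_decomposition_edge_bag: "e \<in> E \<Longrightarrow> \<exists>i<length Bs. e \<subseteq> Bs ! i"
    and path_decomposition_convex:
      "\<lbrakk>i \<le> j; j \<le> k; k < length Bs; x \<in> Bs ! i; x \<in> Bs ! k\<rbrakk> \<Longrightarrow> x \<in> Bs ! j"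
proof -
  note pd = assms[unfolded path_decomposition_def]
  show "i < length Bs \<Longrightarrow> Bs ! i \<subseteq> V" using conjunct1[OF pd] nth_mem by blast
  show "x \<in> V \<Longrightarrow> \<exists>i<length Bs. x \<in> Bs ! i" using conjunct1[OF conjunct2[OF pd]] by blast
  show "e \<in> E \<Longrightarrow> \<exists>i<length Bs. e \<subseteq> Bs ! i"
    using conjunct1[OF conjunct2[OF conjunct2[OF pd]]] by blast
  show "\<lbrakk>i \<le> j; j \<le> k; k < length Bs; x \<in> Bs ! i; x \<in> Bs ! k\<rbrakk> \<Longrightarrow> x \<in> Bs ! j"
    using conjunct2[OF conjunct2[OF conjunct2[OF pd]]] by blast
qed

lemma edge_is_bag_if_bags_le_2:
  assumes "simple_graph V E" and pd: "path_decomposition V E Bs"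
    and bags: "\<forall>B\<in>set Bs. card B \<le> 2" and "{a, v} \<in> E"
  shows "\<exists>i<length Bs. Bs ! i = {a, v}"
proof -
  obtain i where i: "i < length Bs" "{a, v} \<subseteq> Bs ! i"
    using path_decomposition_edge_bag[OF pd \<open>{a, v} \<in> E\<close>] by blast
  have "a \<noteq> v" using simple_graph_loopless[OF assms(1), of v] \<open>{a, v} \<in> E\<close> by auto
  have "finite (Bs ! i)"
    using path_decomposition_bag_subset[OF pd i(1)] assms(1) by (auto simp: simple_graph_def intro: finite_subset)
  moreover have "card (Bs ! i) \<le> card {a, v}"
    using bags i(1) \<open>a \<noteq> v\<close> nth_mem by fastforce
  ultimately have "Bs ! i = {a, v}"
    using i(2) card_seteq by blast
  with i show ?thesis by blast
qed

text \<open>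
  Take v in T whose last bag comes first. Every neighbour a of v in T has a bag {a,v} of its
  own and occurs in a bag at or after the last bag of v, so by convexity a lies in every bag
  between {a,v} and the last bag of v; hence the bag {b,v} of a second neighbour b cannot
  come after {a,v}.
\<close>

lemma one_degenerate_if_bags_le_2:
  assumes sg: "simple_graph V E" and pd: "path_decomposition V E Bs"
    and bags: "\<forall>B\<in>set Bs. card B \<le> 2"
  shows "one_degenerate E V"
  unfolding one_degenerate_def
proof (intro allI impI)
  fix T assume "T \<subseteq> V" "T \<noteq> {}"
  define last where "last x = Max {i. i < length Bs \<and> x \<in> Bs ! i}" for x
  have last: "last x < length Bs \<and> x \<in> Bs ! last x" if "x \<in> V" for x
    using Max_in[of "{i. i < length Bs \<and> x \<in> Bs ! i}"] path_decomposition_vertex_bag[OF pd that]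
    by (auto simp: last_def)
  have last_ge: "i \<le> last x" if "i < length Bs" "x \<in> Bs ! i" for i x
    using that by (auto simp: last_def intro: Max_ge)
  obtain v where "v \<in> T" and v_first: "\<And>x. x \<in> T \<Longrightarrow> last v \<le> last x"
    using \<open>T \<noteq> {}\<close> ex_has_least_nat[of "\<lambda>x. x \<in> T" _ last] by blast
  have no_later_neighbour: "False"
    if "a \<in> nbhd E v \<inter> T" "a \<noteq> b" "i < j" "j < length Bs" "Bs ! i = {a, v}" "Bs ! j = {b, v}"
    for a b i j
  proof -
    have "a \<in> V" "a \<noteq> v" using that \<open>T \<subseteq> V\<close> simple_graph_loopless[OF sg] by (auto simp: nbhd_def)
    have "j \<le> last a" using last_ge[of j v] v_first[of a] that by auto
    then have "a \<in> Bs ! j"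
      using path_decomposition_convex[OF pd, of i j "last a" a] that last[OF \<open>a \<in> V\<close>] by auto
    with that \<open>a \<noteq> v\<close> show False by auto
  qed
  have "a = b" if ab: "a \<in> nbhd E v \<inter> T" "b \<in> nbhd E v \<inter> T" for a b
  proof (rule ccontr)
    assume "a \<noteq> b"
    obtain i where "i < length Bs" "Bs ! i = {a, v}"
      using ab(1) edge_is_bag_if_bags_le_2[OF sg pd bags, of a v] by (auto simp: nbhd_def)
    moreover obtain j where "j < length Bs" "Bs ! j = {b, v}"
      using ab(2) edge_is_bag_if_bags_le_2[OF sg pd bags, of b v] by (auto simp: nbhd_def)
    ultimately show False
      using no_later_neighbour[of a b i j] no_later_neighbour[of b a j i] ab \<open>a \<noteq> b\<close>
      by (cases i j rule: linorder_cases) (auto simp: doubleton_eq_iff)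
  qed
  moreover have "finite T" using \<open>T \<subseteq> V\<close> sg finite_subset by (auto simp: simple_graph_def)
  ultimately show "\<exists>v\<in>T. card (nbhd E v \<inter> T) \<le> 1"
    using \<open>v \<in> T\<close> by (auto simp: card_le_Suc0_iff_eq)
qed

theorem num_induced_matchings_pathwidth_le_1:
  fixes \<alpha> :: real
  assumes "1 < \<alpha>" "\<alpha>^2 + 1 \<le> \<alpha>^3" and sg: "simple_graph V E" and "pathwidth V E \<le> 1"
  shows "real (num_induced_matchings V E) \<le> \<alpha> ^ card V"
proof -
  obtain Bs where "path_decomposition V E Bs" "\<forall>B\<in>set Bs. card B \<le> 2"
    using pathwidth_decomposition_exists[OF sg] \<open>pathwidth V E \<le> 1\<close> by fastforce
  then have "one_degenerate E V" by (rule one_degenerate_if_bags_le_2[OF sg])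
  moreover have "finite V" using sg by (simp add: simple_graph_def)
  ultimately show ?thesis
    unfolding num_induced_matchings_eq_card
    using card_induced_matchings_on_one_degenerate[OF assms(1,2) simple_graph_loopless[OF sg]] by blast
qed

definition nat_path_edges :: "nat set set" where
  "nat_path_edges = {{i, Suc i} | i. True}"

lemma nbhd_nat_path_edges: "u \<in> nbhd nat_path_edges v \<longleftrightarrow> u = Suc v \<or> v = Suc u"
  by (auto simp: nbhd_def nat_path_edges_def doubleton_eq_iff)

lemma num_induced_matchings_path:
  "num_induced_matchings (path_V n) (path_E n) = card (induced_matchings_on nat_path_edges {0..<n})"
proof -
  have same_nbhd: "nbhd (path_E n) v \<inter> D = nbhd nat_path_edges v \<inter> D"
    if "D \<subseteq> {0..<n}" "v \<in> D" for D v
    using that unfolding nbhd_def nat_path_edges_def path_E_def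
    by (force simp: doubleton_eq_iff subset_iff)
  have "induced_matchings_on (path_E n) {0..<n} = induced_matchings_on nat_path_edges {0..<n}"
    unfolding induced_matchings_on_def by (rule Collect_cong) (use same_nbhd in auto)
  then show ?thesis by (simp add: num_induced_matchings_eq_card path_V_def)
qed

lemma card_induced_matchings_on_path_Suc:
  assumes "1 \<le> m"
  shows "card (induced_matchings_on nat_path_edges {0..<Suc m}) =
         card (induced_matchings_on nat_path_edges {0..<m})
       + card (induced_matchings_on nat_path_edges {0..<m - 2})"
proof -
  have "nbhd nat_path_edges m \<inter> {0..<Suc m} = {m - 1}"
    using assms by (auto simp: nbhd_nat_path_edges)
  moreover have "{0..<Suc m} - {m} = {0..<m}" by auto
  moreover have "{0..<Suc m} - (insert (m - 1) (nbhd nat_path_edges (m - 1))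
                   \<union> insert m (nbhd nat_path_edges m)) = {0..<m - 2}"
    using assms by (auto simp: nbhd_nat_path_edges)
  moreover have "{x} \<notin> nat_path_edges" for x by (auto simp: nat_path_edges_def doubleton_eq_iff)
  ultimately show ?thesis
    using card_induced_matchings_on_leaf[of nat_path_edges "{0..<Suc m}" m "m - 1"] by simp
qed

text \<open>Narayana's cows sequence (OEIS A000930) shifted by two.\<close>

fun narayana :: "nat \<Rightarrow> nat" where
  "narayana 0 = 1"
| "narayana (Suc 0) = 1"
| "narayana (Suc (Suc 0)) = 2"
| "narayana (Suc (Suc (Suc n))) = narayana (Suc (Suc n)) + narayana n"

lemma card_induced_matchings_on_path: "card (induced_matchings_on nat_path_edges {0..<n}) = narayana n"
proof (induction n rule: narayana.induct)
  have path_1: "card (induced_matchings_on nat_path_edges {0..<Suc 0}) = 1"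
    using induced_matchings_on_isolated[of nat_path_edges 0 "{0..<Suc 0}"]
    by (simp add: nbhd_nat_path_edges induced_matchings_on_empty)
  case 2 show ?case using path_1 by simp
  case 3 show ?case
    using card_induced_matchings_on_path_Suc[of 1] path_1 by (simp add: induced_matchings_on_empty)
next
  case (4 n) then show ?case using card_induced_matchings_on_path_Suc[of "Suc (Suc n)"] by simp
qed (simp add: induced_matchings_on_empty)

lemma recurrence_comparison:
  fixes x y :: "nat \<Rightarrow> real"
  assumes x_sub: "\<And>n. N \<le> n \<Longrightarrow> x (n + 3) \<le> x (n + 2) + x n"
    and y_super: "\<And>n. N \<le> n \<Longrightarrow> y (n + 2) + y n \<le> y (n + 3)"
    and base: "\<And>k. k < 3 \<Longrightarrow> x (N + k) \<le> y (N + k)"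
  shows "N \<le> n \<Longrightarrow> x n \<le> y n"
proof (induction n rule: less_induct)
  case (less n)
  show ?case
  proof (cases "n < N + 3")
    case True
    then show ?thesis using base[of "n - N"] less.prems by simp
  next
    case False
    then obtain k where k: "n = k + 3" "N \<le> k" by (intro that[of "n - 3"]) auto
    then have "x n \<le> x (k + 2) + x k" using x_sub by simp
    also have "\<dots> \<le> y (k + 2) + y k" using less.IH[of k] less.IH[of "k + 2"] k by simp
    also have "\<dots> \<le> y n" using y_super k by simp
    finally show ?thesis .
  qed
qed

lemma narayana_add_3: "narayana (n + 3) = narayana (n + 2) + narayana n"
  by (simp add: numeral_eq_Suc)

lemma power_add_3_if_cubic:
  fixes \<alpha> :: real
  assumes "\<alpha>^3 = \<alpha>^2 + 1"
  shows "\<alpha> ^ (n + 3) = \<alpha> ^ (n + 2) + \<alpha> ^ n"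
  using assms by (simp add: power_add power2_eq_square algebra_simps)

lemma cubic_root_le:
  fixes \<alpha> :: real
  assumes "0 < \<alpha>" and "\<alpha>^3 = \<alpha>^2 + 1"
  shows "\<alpha> \<le> 1.4656"
proof (rule ccontr)
  assume "\<not> \<alpha> \<le> 1.4656"
  then have "(1.4656::real)^2 * (1.4656 - 1) \<le> \<alpha>^2 * (\<alpha> - 1)"
    by (intro mult_mono power_mono) auto
  also have "\<dots> = 1" using assms(2) by (simp add: algebra_simps power2_eq_square power3_eq_cube)
  finally show False by (simp add: power2_eq_square)
qed

lemma narayana_le_power:
  fixes \<alpha> :: real
  assumes "1 < \<alpha>" and "\<alpha>^3 = \<alpha>^2 + 1"
  shows "real (narayana n) \<le> \<alpha> ^ n"
proof (rule recurrence_comparison[where N = 0])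
  have "2 \<le> \<alpha>^2" using two_le_square_if_cubic assms by simp
  then show "real (narayana (0 + k)) \<le> \<alpha> ^ (0 + k)" if "k < 3" for k
    using that assms(1) by (auto simp: less_Suc_eq numeral_eq_Suc)
qed (simp_all add: narayana_add_3 power_add_3_if_cubic[OF assms(2)])

lemma narayana_ge_power:
  fixes \<alpha> :: real
  assumes "1 < \<alpha>" and "\<alpha>^3 = \<alpha>^2 + 1" and "8 \<le> n"
  shows "0.89 * \<alpha> ^ n \<le> real (narayana n)"
proof (rule recurrence_comparison[where N = 8, OF _ _ _ \<open>8 \<le> n\<close>])
  have base: "0.89 * \<alpha> ^ m \<le> real (narayana m)" if "m \<in> {8, 9, 10}" for m
  proof -
    have "0.89 * \<alpha> ^ m \<le> 0.89 * 1.4656 ^ m"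
      using assms cubic_root_le[of \<alpha>] by (intro mult_left_mono power_mono) auto
    also have "\<dots> \<le> real (narayana m)"
      using that by (auto simp: numeral_eq_Suc power_divide)
    finally show ?thesis .
  qed
  show "0.89 * \<alpha> ^ (8 + k) \<le> real (narayana (8 + k))" if "k < 3" for k
    using that base[of "8 + k"] by (auto simp: less_Suc_eq numeral_3_eq_3)
qed (simp_all add: narayana_add_3 power_add_3_if_cubic[OF assms(2)] algebra_simps)

theorem mainTheorem4:
  fixes \<alpha> :: real
  assumes "1 < \<alpha>" and "\<alpha> < 2" and "\<alpha> ^ 3 - \<alpha> ^ 2 - 1 = 0"
  shows "(\<forall>(V :: 'a set) E. simple_graph V E \<and> pathwidth V E \<le> 1 \<longrightarrow>
            real (num_induced_matchings V E) \<le> \<alpha> ^ card V)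
       \<and> (\<exists>g :: nat \<Rightarrow> real. g \<longlonglongrightarrow> 0 \<and>
            (\<forall>n. real (num_induced_matchings (path_V n) (path_E n)) \<ge> 0.89 * \<alpha> ^ n + g n))
       \<and> (\<lambda>n. real (num_induced_matchings (path_V n) (path_E n))) \<in> \<Theta>(\<lambda>n. \<alpha> ^ n)"
proof -
  have cubic: "\<alpha>^3 = \<alpha>^2 + 1" using assms(3) by simp
  have path: "num_induced_matchings (path_V n) (path_E n) = narayana n" for n
    by (simp add: num_induced_matchings_path card_induced_matchings_on_path)
  note lower = narayana_ge_power[OF assms(1) cubic] and upper = narayana_le_power[OF assms(1) cubic]
  define g where "g n = min 0 (real (narayana n) - 0.89 * \<alpha> ^ n)" for n
  have "eventually (\<lambda>n. g n = 0) sequentially"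
    unfolding eventually_sequentially g_def using lower by (intro exI[of _ 8]) auto
  then have "g \<longlonglongrightarrow> 0" by (rule tendsto_eventually)
  have "eventually (\<lambda>n. 0.89 * norm (\<alpha> ^ n) \<le> norm (real (narayana n))
          \<and> norm (real (narayana n)) \<le> 1 * norm (\<alpha> ^ n)) at_top"
    unfolding eventually_at_top_linorder using lower upper assms(1) by (intro exI[of _ 8]) auto
  then have "(\<lambda>n. real (narayana n)) \<in> \<Theta>(\<lambda>n. \<alpha> ^ n)"
    by (intro bigthetaI'[of "0.89" 1]) auto
  with \<open>g \<longlonglongrightarrow> 0\<close> show ?thesis
    using num_induced_matchings_pathwidth_le_1[OF assms(1)] cubic
    by (auto simp: path g_def intro!: exI[of _ g])
qed

end
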